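(* Let $\mathcal{P},\mathcal{S}$ be patterns, let $P\in\mathbb{R}^{n\times n}(\mathcal{P})$ be a reversible stochastic matrix with stationary distribution $\boldsymbol{\pi}$, $\hat{\boldsymbol{\pi}}=\boldsymbol{\pi}^{1/2}$ entrywise, and let \[ \mathcal{M}_{P,\boldsymbol{\pi}}=\Big\{X\in\mathbb{R}^{n\times n}_{\mathrm{exact}}(\mathcal{P}\cup\mathcal{S}) : X=X^\top,\ X\hat{\boldsymbol{\pi}}=\hat{\boldsymbol{\pi}},\ X_{ij}>0\text{ if }\{i,j\}\in\mathcal{S},\ X_{ij}=\tfrac{\hat\pi_i}{\hat\pi_j}P_{ij}\text{ if }\{i,j\}\notin\mathcal{S}\Big\}. \] Then for every $X\in\mathcal{M}_{P,\boldsymbol{\pi}}$, the tangent space of $\mathcal{M}_{P,\boldsymbol{\pi}}$ at $X$ (the set of velocities $\dot\gamma(0)$ of smooth curves $\gamma$ in $\mathcal{M}_{P,\boldsymbol{\pi}}$ with $\gamma(0)=X$) is \[ \mathcal{T}_X\mathcal{M}_{P,\boldsymbol{\pi}}=\{\xi\in\mathbb{R}^{n\times n}(\mathcal{S}) : \xi=\xi^\top,\ \xi\hat{\boldsymbol{\pi}}=0\}. \]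
   Context: A stochastic matrix is nonnegative with row sums $1$; it is reversible if irreducible and its (unique, positive) stationary distribution $\boldsymbol{\pi}$ (probability vector with $\boldsymbol{\pi}^\top P=\boldsymbol{\pi}^\top$) satisfies $\pi_iP_{ij}=\pi_jP_{ji}$ for all $i,j$. A pattern is a set of unordered pairs $\{i,j\}$, $1\le i,j\le n$, containing $\{i,i\}$ for all $i$. $\mathbb{R}^{n\times n}(\mathcal{S})$ is the set of real $n\times n$ matrices $\Delta$ with $\Delta_{ij}=\Delta_{ji}=0$ whenever $\{i,j\}\notin\mathcal{S}$; $\mathbb{R}^{n\times n}_{\mathrm{exact}}(\mathcal{S})$ is the set of real $n\times n$ matrices $\Delta$ with ($\Delta_{ij}\ne0$ and $\Delta_{ji}\ne0$) if and only if $\{i,j\}\in\mathcal{S}$. *)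

theory Defs
  imports "HOL-Analysis.Analysis"
begin

text \<open>n x n real matrices are modelled as real^'n^'n with a finite index type 'n;
  entry (i,j) is X $ i $ j. An unordered pair {i,j} is the set {i,j} (so {i,i} = {i}).\<close>

definition is_pattern :: "'n set set \<Rightarrow> bool" where
  "is_pattern S \<longleftrightarrow> (\<forall>e\<in>S. \<exists>i j. e = {i, j}) \<and> (\<forall>i. {i, i} \<in> S)"

definition in_pattern :: "'n set set \<Rightarrow> real^'n^'n \<Rightarrow> bool" where
  "in_pattern S D \<longleftrightarrow> (\<forall>i j. {i, j} \<notin> S \<longrightarrow> D $ i $ j = 0 \<and> D $ j $ i = 0)"

definition in_exact_pattern :: "'n set set \<Rightarrow> real^'n^'n \<Rightarrow> bool" where
  "in_exact_pattern S D \<longleftrightarrow> (\<forall>i j. (D $ i $ j \<noteq> 0 \<and> D $ j $ i \<noteq> 0) \<longleftrightarrow> {i, j} \<in> S)"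

definition stochastic :: "real^'n^'n::finite \<Rightarrow> bool" where
  "stochastic P \<longleftrightarrow> (\<forall>i j. P $ i $ j \<ge> 0) \<and> (\<forall>i. (\<Sum>j\<in>UNIV. P $ i $ j) = 1)"

definition irreducible_mat :: "real^'n^'n \<Rightarrow> bool" where
  "irreducible_mat P \<longleftrightarrow> (\<forall>i j. (i, j) \<in> {(k, l). P $ k $ l > 0}\<^sup>*)"

definition stationary_distribution :: "real^'n^'n::finite \<Rightarrow> real^'n \<Rightarrow> bool" where
  "stationary_distribution P \<pi> \<longleftrightarrow>
     (\<forall>i. \<pi> $ i \<ge> 0) \<and> (\<Sum>i\<in>UNIV. \<pi> $ i) = 1 \<and> \<pi> v* P = \<pi>"

definition reversible_with :: "real^'n^'n::finite \<Rightarrow> real^'n \<Rightarrow> bool" where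
  "reversible_with P \<pi> \<longleftrightarrow> stochastic P \<and> irreducible_mat P \<and> stationary_distribution P \<pi>
     \<and> (\<forall>i. \<pi> $ i > 0) \<and> (\<forall>i j. \<pi> $ i * P $ i $ j = \<pi> $ j * P $ j $ i)"

definition sqrt_vec :: "real^'n \<Rightarrow> real^'n" where
  "sqrt_vec v = (\<chi> i. sqrt (v $ i))"

definition M_set :: "'n set set \<Rightarrow> 'n set set \<Rightarrow> real^'n^'n::finite \<Rightarrow> real^'n \<Rightarrow> (real^'n^'n) set" where
  "M_set \<P> \<S> P \<pi> = {X. in_exact_pattern (\<P> \<union> \<S>) X \<and> transpose X = X
      \<and> X *v sqrt_vec \<pi> = sqrt_vec \<pi>
      \<and> (\<forall>i j. {i, j} \<in> \<S> \<longrightarrow> X $ i $ j > 0)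
      \<and> (\<forall>i j. {i, j} \<notin> \<S> \<longrightarrow> X $ i $ j = (sqrt_vec \<pi> $ i / sqrt_vec \<pi> $ j) * P $ i $ j)}"

definition vderiv :: "(real \<Rightarrow> 'a::real_normed_vector) \<Rightarrow> real \<Rightarrow> 'a" where
  "vderiv f = (\<lambda>t. vector_derivative f (at t))"

definition smooth_on_interval :: "real \<Rightarrow> real \<Rightarrow> (real \<Rightarrow> 'a::real_normed_vector) \<Rightarrow> bool" where
  "smooth_on_interval a b \<gamma> \<longleftrightarrow> (\<forall>k. \<forall>t\<in>{a<..<b}. ((vderiv ^^ k) \<gamma>) differentiable (at t))"

definition tangent_space :: "('a::real_normed_vector) set \<Rightarrow> 'a \<Rightarrow> 'a set" where
  "tangent_space M X = {v. \<exists>\<epsilon>>0. \<exists>\<gamma>. smooth_on_interval (-\<epsilon>) \<epsilon> \<gamma>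
       \<and> (\<forall>t\<in>{-\<epsilon><..<\<epsilon>}. \<gamma> t \<in> M) \<and> \<gamma> 0 = X \<and> (\<gamma> has_vector_derivative v) (at 0)}"

end

theory Submission
  imports Defs
begin

text \<open>\<open>M_set \<P> \<S> P \<pi>\<close> is an open subset (cut out by the strict inequalities on the entries
  in \<open>\<S>\<close>) of the affine subspace given by symmetry, \<open>X \<pi>\<^sup>1\<^sup>/\<^sup>2 = \<pi>\<^sup>1\<^sup>/\<^sup>2\<close> and the prescribed entries
  outside \<open>\<S>\<close>. Curves in it therefore have velocities in the direction space of that subspace,
  and conversely every such direction is the velocity of a straight line, which stays in the
  open set for small times.\<close>

lemma tangent_space_subset_kernel:
  fixes L :: "'a::real_normed_vector \<Rightarrow> 'b::real_normed_vector"
  assumes L: "bounded_linear L" and const: "\<forall>Y\<in>M. L Y = L X"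
    and v: "v \<in> tangent_space M X"
  shows "L v = 0"
proof -
  obtain \<epsilon> \<gamma> where \<epsilon>: "\<epsilon> > 0" and in_M: "\<forall>t\<in>{-\<epsilon><..<\<epsilon>}. \<gamma> t \<in> M"
    and \<gamma>': "(\<gamma> has_vector_derivative v) (at 0)"
    using v unfolding tangent_space_def by blast
  have "((\<lambda>t. L (\<gamma> t)) has_vector_derivative L v) (at 0)"
    using bounded_linear.has_vector_derivative[OF L \<gamma>'] .
  moreover have "((\<lambda>t. L X) has_vector_derivative 0) (at 0)"
    by (rule derivative_eq_intros) auto
  then have "((\<lambda>t. L (\<gamma> t)) has_vector_derivative 0) (at 0)"
    by (rule has_vector_derivative_transform_within_open[where S = "{-\<epsilon><..<\<epsilon>}"])
       (use \<epsilon> in_M const in auto)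
  ultimately show ?thesis
    by (rule vector_derivative_unique_at)
qed

lemma vderiv_affine:
  "vderiv (\<lambda>t. a + t *\<^sub>R b) = (\<lambda>t. b + t *\<^sub>R (0::'a::real_normed_vector))"
proof -
  have "((\<lambda>t. a + t *\<^sub>R b) has_vector_derivative b) (at t)" for t
    by (auto intro!: derivative_eq_intros)
  then show ?thesis
    unfolding vderiv_def by (auto intro: vector_derivative_at)
qed

lemma smooth_on_interval_affine:
  "smooth_on_interval x y (\<lambda>t. a + t *\<^sub>R (b::'a::real_normed_vector))"
proof -
  have affine: "\<exists>a' b'. (vderiv ^^ k) (\<lambda>t. a + t *\<^sub>R b) = (\<lambda>t. a' + t *\<^sub>R (b'::'a))" for k
  proof (induction k)
    case 0
    then show ?case by auto
  next
    case (Suc k)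
    then obtain a' b' where "(vderiv ^^ k) (\<lambda>t. a + t *\<^sub>R b) = (\<lambda>t. a' + t *\<^sub>R b')"
      by blast
    then have "(vderiv ^^ Suc k) (\<lambda>t. a + t *\<^sub>R b) = (\<lambda>t. b' + t *\<^sub>R 0)"
      by (simp add: vderiv_affine)
    then show ?case by blast
  qed
  show ?thesis
    unfolding smooth_on_interval_def
  proof (intro allI ballI)
    fix k t
    obtain a' b' where "(vderiv ^^ k) (\<lambda>t. a + t *\<^sub>R b) = (\<lambda>t. a' + t *\<^sub>R b')"
      using affine by blast
    moreover have "(\<lambda>t. a' + t *\<^sub>R b') differentiable (at t)"
      by (intro derivative_intros)
    ultimately show "(vderiv ^^ k) (\<lambda>t. a + t *\<^sub>R b) differentiable (at t)"
      by simp
  qed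
qed

lemma tangent_space_if_eventually_line:
  fixes X \<xi> :: "'a::real_normed_vector"
  assumes "\<forall>\<^sub>F t in nhds 0. X + t *\<^sub>R \<xi> \<in> M"
  shows "\<xi> \<in> tangent_space M X"
proof -
  obtain d where d: "d > 0" and line: "\<forall>t. dist t 0 < d \<longrightarrow> X + t *\<^sub>R \<xi> \<in> M"
    using assms unfolding eventually_nhds_metric by blast
  have "((\<lambda>t. X + t *\<^sub>R \<xi>) has_vector_derivative \<xi>) (at 0)"
    by (auto intro!: derivative_eq_intros)
  moreover have "\<forall>t\<in>{-d<..<d}. X + t *\<^sub>R \<xi> \<in> M"
    using line by (auto simp: dist_real_def)
  ultimately show ?thesis
    unfolding tangent_space_def using d smooth_on_interval_affine by fastforce
qed

lemma transpose_eq_iff: "transpose (A::'a^'n^'n) = A \<longleftrightarrow> (\<forall>i j. A $ i $ j = A $ j $ i)"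
  by (auto simp: transpose_def vec_eq_iff)

lemma eventually_entries_pos_along_line:
  fixes X \<xi> :: "real^'n::finite^'m::finite"
  assumes "\<forall>i j. Q i j \<longrightarrow> X $ i $ j > 0"
  shows "\<forall>\<^sub>F t in nhds 0. \<forall>i j. Q i j \<longrightarrow> (X + t *\<^sub>R \<xi>) $ i $ j > 0"
proof (intro eventually_all_finite)
  fix i j
  have "((\<lambda>t. X $ i $ j + t * \<xi> $ i $ j) \<longlongrightarrow> X $ i $ j + 0 * \<xi> $ i $ j) (nhds 0)"
    by (intro tendsto_intros filterlim_ident)
  then have "((\<lambda>t. (X + t *\<^sub>R \<xi>) $ i $ j) \<longlongrightarrow> X $ i $ j) (nhds 0)"
    by simp
  then show "\<forall>\<^sub>F t in nhds 0. Q i j \<longrightarrow> (X + t *\<^sub>R \<xi>) $ i $ j > 0"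
    using assms by (cases "Q i j") (auto dest: order_tendstoD(1))
qed

lemma add_mem_M_set:
  assumes X: "X \<in> M_set \<P> \<S> P \<pi>"
    and \<xi>: "in_pattern \<S> \<xi>" "transpose \<xi> = \<xi>" "\<xi> *v sqrt_vec \<pi> = 0"
    and pos: "\<forall>i j. {i, j} \<in> \<S> \<longrightarrow> (X + \<xi>) $ i $ j > 0"
  shows "X + \<xi> \<in> M_set \<P> \<S> P \<pi>"
proof -
  have unchanged: "(X + \<xi>) $ i $ j = X $ i $ j" if "{i, j} \<notin> \<S>" for i j
    using \<xi>(1) that by (auto simp: in_pattern_def)
  have "in_exact_pattern (\<P> \<union> \<S>) (X + \<xi>)"
    unfolding in_exact_pattern_def
  proof (intro allI)
    fix i j
    show "((X + \<xi>) $ i $ j \<noteq> 0 \<and> (X + \<xi>) $ j $ i \<noteq> 0) \<longleftrightarrow> {i, j} \<in> \<P> \<union> \<S>"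
    proof (cases "{i, j} \<in> \<S>")
      case True
      then show ?thesis
        using pos by (force simp: insert_commute)
    next
      case False
      then have "(X + \<xi>) $ i $ j = X $ i $ j" "(X + \<xi>) $ j $ i = X $ j $ i"
        using unchanged by (auto simp: insert_commute)
      moreover have "in_exact_pattern (\<P> \<union> \<S>) X"
        using X by (simp add: M_set_def)
      ultimately show ?thesis
        using False unfolding in_exact_pattern_def by presburger
    qed
  qed
  with X \<xi> pos unchanged show ?thesis
    by (auto simp: M_set_def transpose_eq_iff matrix_vector_mult_add_rdistrib)
qed

lemma M_set_contains_line:
  assumes X: "X \<in> M_set \<P> \<S> P \<pi>"
    and \<xi>: "in_pattern \<S> \<xi>" "transpose \<xi> = \<xi>" "\<xi> *v sqrt_vec \<pi> = 0"
  shows "\<forall>\<^sub>F t in nhds 0. X + t *\<^sub>R \<xi> \<in> M_set \<P> \<S> P \<pi>"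
proof -
  have "\<forall>i j. {i, j} \<in> \<S> \<longrightarrow> X $ i $ j > 0"
    using X by (simp add: M_set_def)
  then show ?thesis
  proof (rule eventually_entries_pos_along_line[THEN eventually_mono])
    fix t
    assume "\<forall>i j. {i, j} \<in> \<S> \<longrightarrow> (X + t *\<^sub>R \<xi>) $ i $ j > 0"
    moreover have "in_pattern \<S> (t *\<^sub>R \<xi>)" "transpose (t *\<^sub>R \<xi>) = t *\<^sub>R \<xi>"
      "(t *\<^sub>R \<xi>) *v sqrt_vec \<pi> = 0"
      using \<xi> by (auto simp: in_pattern_def transpose_eq_iff simp flip: scaleR_matrix_vector_assoc)
    ultimately show "X + t *\<^sub>R \<xi> \<in> M_set \<P> \<S> P \<pi>"
      using add_mem_M_set[OF X] by blast
  qed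
qed

lemma tangent_space_M_set_subset:
  fixes P :: "real^'n::finite^'n"
  assumes v: "v \<in> tangent_space (M_set \<P> \<S> P \<pi>) X"
  shows "in_pattern \<S> v \<and> transpose v = v \<and> v *v sqrt_vec \<pi> = 0"
proof -
  let ?M = "M_set \<P> \<S> P \<pi>" and ?s = "sqrt_vec \<pi>"
  have X: "X \<in> ?M"
    using v unfolding tangent_space_def by fastforce
  have entry_zero: "v $ i $ j = 0" if "{i, j} \<notin> \<S>" for i j
  proof (rule tangent_space_subset_kernel[OF _ _ v])
    show "bounded_linear (\<lambda>Y::real^'n^'n. Y $ i $ j)"
      by (simp add: bounded_linear_compose[OF bounded_linear_vec_nth bounded_linear_vec_nth])
    show "\<forall>Y\<in>?M. Y $ i $ j = X $ i $ j"
      using X that by (simp add: M_set_def)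
  qed
  have "transpose v - v = 0"
  proof (rule tangent_space_subset_kernel[OF _ _ v])
    show "bounded_linear (\<lambda>Y::real^'n^'n. transpose Y - Y)"
      by (rule linear_conv_bounded_linear[THEN iffD1])
         (auto intro!: linearI simp: transpose_def vec_eq_iff algebra_simps)
    show "\<forall>Y\<in>?M. transpose Y - Y = transpose X - X"
      using X by (simp add: M_set_def)
  qed
  moreover have "v *v ?s = 0"
  proof (rule tangent_space_subset_kernel[OF _ _ v])
    show "bounded_linear (\<lambda>Y::real^'n^'n. Y *v ?s)"
      by (rule linear_conv_bounded_linear[THEN iffD1])
         (auto intro!: linearI simp: matrix_vector_mult_add_rdistrib scaleR_matrix_vector_assoc)
    show "\<forall>Y\<in>?M. Y *v ?s = X *v ?s"
      using X by (simp add: M_set_def)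
  qed
  moreover have "in_pattern \<S> v"
    using entry_zero by (auto simp: in_pattern_def insert_commute)
  ultimately show ?thesis
    by simp
qed

theorem lemma4p5:
  fixes \<P> \<S> :: "'n::finite set set" and P :: "real^'n^'n" and \<pi> :: "real^'n"
  assumes "is_pattern \<P>" and "is_pattern \<S>"
    and "in_pattern \<P> P"
    and "reversible_with P \<pi>"
    and "X \<in> M_set \<P> \<S> P \<pi>"
  shows "tangent_space (M_set \<P> \<S> P \<pi>) X =
           {\<xi>. in_pattern \<S> \<xi> \<and> transpose \<xi> = \<xi> \<and> \<xi> *v sqrt_vec \<pi> = 0}"
proof (intro set_eqI iffI)
  fix \<xi>
  assume "\<xi> \<in> tangent_space (M_set \<P> \<S> P \<pi>) X"
  then show "\<xi> \<in> {\<xi>. in_pattern \<S> \<xi> \<and> transpose \<xi> = \<xi> \<and> \<xi> *v sqrt_vec \<pi> = 0}"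
    using tangent_space_M_set_subset by simp
next
  fix \<xi>
  assume "\<xi> \<in> {\<xi>. in_pattern \<S> \<xi> \<and> transpose \<xi> = \<xi> \<and> \<xi> *v sqrt_vec \<pi> = 0}"
  then show "\<xi> \<in> tangent_space (M_set \<P> \<S> P \<pi>) X"
    by (auto intro: tangent_space_if_eventually_line M_set_contains_line[OF assms(5)])
qed

end
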